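(* Let $L\ge 2$ and let $f_{i,j}:\mathbb{R}\to\mathbb{R}$, $i,j=0,\ldots,L-1$, be $1$-periodic functions with absolutely convergent Fourier series. Consider the two-dimensional compact $\mathrm{U}(1)$ lattice gauge integral $$\mathcal{I} := \int_{[0,1]^{L^2}}\int_{[0,1]^{L^2}} \prod_{i=0}^{L-1}\prod_{j=0}^{L-1} f_{i,j}\bigl(x^a_{i,j} - x^a_{i,j+1} - x^b_{i,j} + x^b_{i+1,j}\bigr)\,\mathrm{d}\boldsymbol{x}^a\,\mathrm{d}\boldsymbol{x}^b,$$ where $\boldsymbol{x}^a=(x^a_{i,j})_{i,j=0}^{L-1}$, $\boldsymbol{x}^b=(x^b_{i,j})_{i,j=0}^{L-1}$ and all indices are taken modulo $L$. (Equivalently, $\mathcal{I}=\int_{([0,1]^L)^L}\prod_{i=0}^{L-1} g_i(\boldsymbol{y}_{i+1}-\boldsymbol{y}_i)\,\mathrm{d}\boldsymbol{y}_0\cdots\mathrm{d}\boldsymbol{y}_{L-1}$ with $\boldsymbol{y}_L\equiv\boldsymbol{y}_0$ and $g_i(\boldsymbol{y})=\int_{[0,1]^L}\prod_{j=0}^{L-1} f_{i,j}(x_j-x_{j+1}+y_j)\,\mathrm{d}\boldsymbol{x}$, $x_L\equiv x_0$.) Define $\mu_{i+jL}:=f_{i,j}$ for $i,j=0,\ldots,L-1$. Then $$\mathcal{I} = \int_{[0,1]^{L^2}} \prod_{k=0}^{L^2-1} \mu_k\bigl(x_{k+1}-x_k\bigr)\,\mathrm{d}\boldsymbol{x},\qquad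 \boldsymbol{x}=(x_0,\ldots,x_{L^2-1}),$$ where the indices are now taken modulo $L^2$, i.e. $x_{L^2}\equiv x_0$.
   Context: A $1$-periodic function $f$ has absolutely convergent Fourier series if $\sum_{m\in\mathbb{Z}}|\hat f(m)|<\infty$ with $\hat f(m)=\int_0^1 f(x)e^{-2\pi\mathrm{i} m x}\,\mathrm{d}x$. *)

theory Defs
  imports "HOL-Analysis.Analysis"
begin

definition unit_interval_measure :: "real measure" where
  "unit_interval_measure = restrict_space lborel {0..1}"

definition unit_cube :: "'i set \<Rightarrow> ('i \<Rightarrow> real) measure" where
  "unit_cube I = PiM I (\<lambda>_. unit_interval_measure)"

definition fourier_coeff :: "(real \<Rightarrow> real) \<Rightarrow> int \<Rightarrow> complex" where
  "fourier_coeff f m =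
     (LINT x : {0..1} | lborel. complex_of_real (f x) * exp (- (2 * pi * \<i> * of_int m * complex_of_real x)))"

definition abs_conv_fourier :: "(real \<Rightarrow> real) \<Rightarrow> bool" where
  "abs_conv_fourier f \<longleftrightarrow>
     (\<forall>x. f (x + 1) = f x) \<and> f \<in> borel_measurable borel \<and>
     set_integrable lborel {0..1} f \<and>
     (\<lambda>m. norm (fourier_coeff f m)) summable_on (UNIV :: int set)"

end

theory Submission
  imports Defs "HOL-Probability.Probability"
begin

(* Both sides equal the sum over m in Z of the products of the Fourier coefficients f_ij^(m).
   For symmetric Fourier partial sums this is a finite computation: expanding the product gives
   a sum of characters e(sum_v kappa_v x_v), whose integral over the cube vanishes unless every
   kappa_v is 0. Along the cycle x_(k+1) - x_k this forces all frequencies to coincide; for the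
   plaquettes, integrating out x^b forces the frequencies to be constant in the first index and
   integrating out x^a then forces them to be constant in the second. The general case follows by
   dominated convergence: each f_ij agrees almost everywhere with its Fourier series (uniqueness of
   Fourier coefficients, via Stone-Weierstrass and Lebesgue differentiation), and each argument
   x_p + w(x), with w independent of x_p, avoids any null set almost surely. *)

section \<open>Characters of the circle and the unit cube\<close>

definition e2pi :: "real \<Rightarrow> complex" where
  "e2pi t = exp (2 * pi * \<i> * complex_of_real t)"

lemma e2pi_add: "e2pi (a + b) = e2pi a * e2pi b"
  unfolding e2pi_def by (simp add: distrib_left exp_add)

lemma e2pi_diff: "e2pi (a - b) = e2pi a / e2pi b"
  unfolding e2pi_def by (simp add: right_diff_distrib exp_diff)

lemma norm_e2pi [simp]: "norm (e2pi t) = 1"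
  unfolding e2pi_def by (simp add: norm_exp_eq_Re)

lemma e2pi_nonzero [simp]: "e2pi t \<noteq> 0"
  unfolding e2pi_def by simp

lemma e2pi_zero [simp]: "e2pi 0 = 1"
  unfolding e2pi_def by simp

lemma e2pi_sum: "finite A \<Longrightarrow> e2pi (\<Sum>x\<in>A. g x) = (\<Prod>x\<in>A. e2pi (g x))"
  by (induction A rule: finite_induct) (auto simp: e2pi_add)

lemma cnj_e2pi: "cnj (e2pi t) = e2pi (- t)"
  unfolding e2pi_def by (simp add: exp_cnj)

lemma e2pi_eq_1_iff: "e2pi x = 1 \<longleftrightarrow> x \<in> \<int>"
proof
  assume "e2pi x = 1"
  then obtain n :: int where "Im (2 * pi * \<i> * complex_of_real x) = of_int (2 * n) * pi"
    unfolding e2pi_def exp_eq_1 by blast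
  then have "x = of_int n" by simp
  then show "x \<in> \<int>" by simp
next
  assume "x \<in> \<int>"
  then obtain n where "x = of_int n" by (auto elim: Ints_cases)
  then show "e2pi x = 1"
    unfolding e2pi_def using exp_integer_2pi[of "of_int n"] by (simp add: mult_ac)
qed

lemma continuous_on_e2pi [continuous_intros]:
  "continuous_on S g \<Longrightarrow> continuous_on S (\<lambda>t. e2pi (g t))"
  unfolding e2pi_def by (intro continuous_intros)

lemma borel_measurable_e2pi [measurable]: "e2pi \<in> borel_measurable borel"
  by (intro borel_measurable_continuous_onI continuous_on_e2pi continuous_on_id)

lemma e2pi_has_vector_derivative:
  "((\<lambda>t. e2pi (k * t)) has_vector_derivative (2 * pi * \<i> * of_real k * e2pi (k * t))) (at t within S)"
proof -
  have "\<And>t. e2pi (k * t) = exp (t *\<^sub>R (2 * pi * \<i> * of_real k))"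
    unfolding e2pi_def by (simp add: scaleR_conv_of_real mult_ac)
  then show ?thesis
    by (simp only:) (rule has_vector_derivative_at_within, rule exp_scaleR_has_vector_derivative_left)
qed

lemma space_unit_interval_measure [simp]: "space unit_interval_measure = {0..1}"
  unfolding unit_interval_measure_def by (simp add: space_restrict_space)

lemma prob_space_unit_interval_measure: "prob_space unit_interval_measure"
proof
  have "emeasure unit_interval_measure {0..1} = emeasure lborel {0..1::real}"
    unfolding unit_interval_measure_def by (subst emeasure_restrict_space) auto
  then show "emeasure unit_interval_measure (space unit_interval_measure) = 1" by simp
qed

interpretation unit_interval: prob_space unit_interval_measure
  by (rule prob_space_unit_interval_measure)

lemma prob_space_unit_cube: "prob_space (unit_cube I)"
  unfolding unit_cube_def by (intro prob_space_PiM prob_space_unit_interval_measure)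

lemma product_sigma_finite_unit_interval: "product_sigma_finite (\<lambda>_. unit_interval_measure)"
  unfolding product_sigma_finite_def by (auto intro: unit_interval.sigma_finite_measure_axioms)

lemma borel_measurable_unit_interval:
  "f \<in> borel_measurable borel \<Longrightarrow> f \<in> borel_measurable unit_interval_measure"
  unfolding unit_interval_measure_def by (intro measurable_restrict_space1) simp

lemma borel_measurable_unit_cube_component:
  assumes "v \<in> V"
  shows "(\<lambda>x. x v) \<in> borel_measurable (unit_cube V)"
proof -
  have "(\<lambda>t::real. t) \<in> borel_measurable unit_interval_measure"
    unfolding unit_interval_measure_def by (intro measurable_restrict_space1) simp
  then show ?thesis
    unfolding unit_cube_def by (rule measurable_compose[OF measurable_component_singleton[OF assms]])
qed

lemma integral_unit_interval:
  fixes f :: "real \<Rightarrow> 'b::{banach, second_countable_topology}"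
  shows "integral\<^sup>L unit_interval_measure f = (LINT x:{0..1}|lborel. f x)"
  unfolding unit_interval_measure_def set_lebesgue_integral_def
  by (subst integral_restrict_space) auto

lemma integrable_unit_interval_iff:
  fixes f :: "real \<Rightarrow> 'b::{banach, second_countable_topology}"
  shows "integrable unit_interval_measure f \<longleftrightarrow> set_integrable lborel {0..1} f"
  unfolding unit_interval_measure_def set_integrable_def
  by (subst integrable_restrict_space) auto

lemma prob_space_norm_integral_le:
  fixes f :: "'a \<Rightarrow> 'b::{banach, second_countable_topology}"
  assumes "prob_space M" and "\<And>x. x \<in> space M \<Longrightarrow> norm (f x) \<le> B"
  shows "norm (integral\<^sup>L M f) \<le> B"
proof -
  interpret prob_space M by fact
  obtain x0 where "x0 \<in> space M" using not_empty by blast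
  then have "0 \<le> B" using assms(2)[of x0] by (meson norm_ge_zero order_trans)
  moreover have "norm (integral\<^sup>L M f) \<le> B" if "integrable M f"
  proof -
    have "norm (integral\<^sup>L M f) \<le> (\<integral>x. norm (f x) \<partial>M)" by (rule integral_norm_bound)
    also have "\<dots> \<le> B" using that assms(2) by (intro integral_le_const) auto
    finally show ?thesis .
  qed
  ultimately show ?thesis by (cases "integrable M f") (auto simp: not_integrable_integral_eq)
qed

lemma integral_e2pi_unit_interval:
  "(\<integral>t. e2pi (of_int k * t) \<partial>unit_interval_measure) = (if k = 0 then 1 else 0)"
proof (cases "k = 0")
  case False
  define c where "c = 2 * pi * \<i> * complex_of_real (of_int k)"
  have c: "c \<noteq> 0" using False by (simp add: c_def)
  have "((\<lambda>t. e2pi (of_int k * t)) has_integral (e2pi (of_int k * 1) / c - e2pi (of_int k * 0) / c)) {0..1}"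
  proof (rule fundamental_theorem_of_calculus)
    fix x :: real
    show "((\<lambda>t. e2pi (of_int k * t) / c) has_vector_derivative e2pi (of_int k * x)) (at x within {0..1})"
      using has_vector_derivative_divide[OF e2pi_has_vector_derivative[of "of_int k" x "{0..1}"], of c] c
      by (simp add: c_def)
  qed simp
  moreover have "e2pi (of_int k) = 1" by (simp add: e2pi_eq_1_iff)
  moreover have "set_integrable lborel {0..1::real} (\<lambda>t. e2pi (of_int k * t))"
    unfolding set_integrable_def
    by (rule borel_integrable_compact) (auto intro!: continuous_intros)
  ultimately show ?thesis
    using False by (simp add: integral_unit_interval set_borel_integral_eq_integral integral_unique)
qed (use unit_interval.prob_space in simp)

lemma integrable_e2pi_unit_interval: "integrable unit_interval_measure (\<lambda>t. e2pi (a * t))"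
  by (rule unit_interval.integrable_const_bound[where B=1])
     (auto intro: borel_measurable_unit_interval)

lemma integral_e2pi_unit_cube:
  fixes \<kappa> :: "'i \<Rightarrow> int"
  assumes "finite V"
  shows "(\<integral>x. e2pi (\<theta> + (\<Sum>v\<in>V. of_int (\<kappa> v) * x v)) \<partial>unit_cube V)
          = (if \<forall>v\<in>V. \<kappa> v = 0 then e2pi \<theta> else 0)"
proof -
  interpret product_sigma_finite "\<lambda>_::'i. unit_interval_measure"
    by (rule product_sigma_finite_unit_interval)
  have "(\<integral>x. e2pi (\<theta> + (\<Sum>v\<in>V. of_int (\<kappa> v) * x v)) \<partial>unit_cube V)
      = e2pi \<theta> * (\<integral>x. (\<Prod>v\<in>V. e2pi (of_int (\<kappa> v) * x v)) \<partial>unit_cube V)"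
    using assms by (simp add: e2pi_add e2pi_sum)
  also have "(\<integral>x. (\<Prod>v\<in>V. e2pi (of_int (\<kappa> v) * x v)) \<partial>unit_cube V)
      = (\<Prod>v\<in>V. \<integral>t. e2pi (of_int (\<kappa> v) * t) \<partial>unit_interval_measure)"
    unfolding unit_cube_def by (rule product_integral_prod[OF assms integrable_e2pi_unit_interval])
  also have "\<dots> = (\<Prod>v\<in>V. if \<kappa> v = 0 then 1 else 0)"
    by (simp add: integral_e2pi_unit_interval)
  also have "\<dots> = (if \<forall>v\<in>V. \<kappa> v = 0 then 1 else 0)"
    using assms by (auto simp: prod_zero_iff)
  finally show ?thesis by simp
qed

lemma integral_unit_cube_trig_sum:
  fixes \<kappa> :: "'m \<Rightarrow> 'i \<Rightarrow> int"
  assumes "finite P" "finite V"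
  shows "(\<integral>x. (\<Sum>m\<in>P. a m * e2pi (\<theta> m + (\<Sum>v\<in>V. of_int (\<kappa> m v) * x v))) \<partial>unit_cube V)
       = (\<Sum>m\<in>P. if \<forall>v\<in>V. \<kappa> m v = 0 then a m * e2pi (\<theta> m) else 0)"
proof -
  interpret prob_space "unit_cube V" by (rule prob_space_unit_cube)
  have "integrable (unit_cube V) (\<lambda>x. a m * e2pi (\<theta> m + (\<Sum>v\<in>V. of_int (\<kappa> m v) * x v)))" for m
    by (rule integrable_const_bound[where B="norm (a m)"])
       (auto simp: norm_mult intro!: borel_measurable_times measurable_compose[OF _ borel_measurable_e2pi]
          borel_measurable_add borel_measurable_sum borel_measurable_unit_cube_component)
  then show ?thesis
    by (auto simp: Bochner_Integration.integral_sum integral_e2pi_unit_cube[OF assms(2)] intro!: sum.cong)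
qed

section \<open>Trigonometric polynomials along a cycle and over the plaquettes\<close>

lemma mod_succ_pred:
  assumes "v < (n::nat)"
  shows "((v + n - 1) mod n + 1) mod n = v"
proof (cases v)
  case (Suc w)
  then have "(v + n - 1) mod n = w" using assms by (simp add: mod_if)
  then show ?thesis using assms Suc by simp
qed (use assms in simp)

lemma mod_pred_succ:
  assumes "k < (n::nat)"
  shows "((k + 1) mod n + n - 1) mod n = k"
  using assms by (cases "k + 1 = n") auto

lemma sum_cyclic_shift:
  assumes "0 < (n::nat)"
  shows "(\<Sum>k<n. g k (h ((k + 1) mod n))) = (\<Sum>v<n. g ((v + n - 1) mod n) (h v))"
  by (rule sum.reindex_bij_witness[of _ "\<lambda>v. (v + n - 1) mod n" "\<lambda>k. (k + 1) mod n"])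
     (use assms mod_succ_pred[of _ n] mod_pred_succ[of _ n] in auto)

lemma cyclic_invariant_imp_constant:
  "\<forall>v<(n::nat). m ((v + n - 1) mod n) = m v \<Longrightarrow> v < n \<Longrightarrow> m v = m 0"
proof (induction v)
  case (Suc w)
  then have "m ((Suc w + n - 1) mod n) = m (Suc w)" by blast
  moreover have "(Suc w + n - 1) mod n = w" using Suc.prems by simp
  ultimately show ?case using Suc by simp
qed simp

lemma prod_sum_e2pi_expand:
  assumes "finite A" "finite D"
  shows "(\<Prod>k\<in>A. \<Sum>m\<in>D. b k m * e2pi (of_int m * u k))
       = (\<Sum>m\<in>PiE A (\<lambda>_. D). (\<Prod>k\<in>A. b k (m k)) * e2pi (\<Sum>k\<in>A. of_int (m k) * u k))"
  using assms by (simp add: prod_sum_PiE prod.distrib e2pi_sum)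

lemma sum_PiE_if_constant:
  fixes F :: "('k \<Rightarrow> 'd) \<Rightarrow> 'a::comm_monoid_add"
  assumes K: "finite K" "K \<noteq> {}" and D: "finite D"
    and P: "\<And>m. m \<in> PiE K (\<lambda>_. D) \<Longrightarrow> P m \<longleftrightarrow> (\<forall>k\<in>K. \<forall>k'\<in>K. m k = m k')"
  shows "(\<Sum>m\<in>PiE K (\<lambda>_. D). if P m then F m else 0) = (\<Sum>c\<in>D. F (\<lambda>k\<in>K. c))"
proof -
  obtain k0 where k0: "k0 \<in> K" using K by auto
  have "{m \<in> PiE K (\<lambda>_. D). P m} = (\<lambda>c. \<lambda>k\<in>K. c) ` D"
  proof (intro equalityI subsetI)
    fix m assume m: "m \<in> {m \<in> PiE K (\<lambda>_. D). P m}"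
    then have "m k = m k0" if "k \<in> K" for k
      using P[of m] that k0 by blast
    then have "m = (\<lambda>k\<in>K. m k0)"
      using m by (auto simp: PiE_def extensional_def)
    moreover have "m k0 \<in> D" using m k0 by auto
    ultimately show "m \<in> (\<lambda>c. \<lambda>k\<in>K. c) ` D" by blast
  next
    fix m assume "m \<in> (\<lambda>c. \<lambda>k\<in>K. c) ` D"
    then obtain c where "c \<in> D" "m = (\<lambda>k\<in>K. c)" by blast
    moreover have "P (\<lambda>k\<in>K. c)" using P[of "\<lambda>k\<in>K. c"] \<open>c \<in> D\<close> by auto
    ultimately show "m \<in> {m \<in> PiE K (\<lambda>_. D). P m}" by auto
  qed
  moreover have "inj_on (\<lambda>c. \<lambda>k\<in>K. c) D"
    by (rule inj_onI) (use k0 in \<open>auto simp: fun_eq_iff dest: spec[of _ k0]\<close>)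
  ultimately show ?thesis
    using K D by (simp add: sum.inter_filter[symmetric] finite_PiE sum.reindex)
qed

lemma cyclic_invariant_iff_constant:
  assumes "0 < (n::nat)"
  shows "(\<forall>v\<in>{..<n}. m ((v + n - 1) mod n) = m v) \<longleftrightarrow> (\<forall>k\<in>{..<n}. \<forall>k'\<in>{..<n}. m k = m k')"
proof
  assume "\<forall>v\<in>{..<n}. m ((v + n - 1) mod n) = m v"
  then have const: "m k = m 0" if "k < n" for k
    using cyclic_invariant_imp_constant that by blast
  show "\<forall>k\<in>{..<n}. \<forall>k'\<in>{..<n}. m k = m k'"
    by (intro ballI) (metis const lessThan_iff)
next
  assume H: "\<forall>k\<in>{..<n}. \<forall>k'\<in>{..<n}. m k = m k'"
  show "\<forall>v\<in>{..<n}. m ((v + n - 1) mod n) = m v"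
  proof
    fix v assume "v \<in> {..<n}"
    moreover have "(v + n - 1) mod n \<in> {..<n}" using assms by simp
    ultimately show "m ((v + n - 1) mod n) = m v" using H by blast
  qed
qed

lemma integral_cycle_trig_poly:
  assumes "0 < (n::nat)"
  shows "(\<integral>x. (\<Prod>k<n. \<Sum>m\<in>{-N..N}. b k m * e2pi (of_int m * (x ((k + 1) mod n) - x k))) \<partial>unit_cube {..<n})
       = (\<Sum>c\<in>{-N..N}. \<Prod>k<n. b k c)"
proof -
  let ?P = "PiE {..<n} (\<lambda>_. {-N..N})"
  have phase: "(\<Sum>k<n. of_int (m k) * (x ((k + 1) mod n) - x k))
        = 0 + (\<Sum>v<n. of_int (m ((v + n - 1) mod n) - m v) * x v)" for m :: "nat \<Rightarrow> int" and x
  proof -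
    have "(\<Sum>k<n. of_int (m k) * (x ((k + 1) mod n) - x k))
        = (\<Sum>k<n. of_int (m k) * x ((k + 1) mod n)) - (\<Sum>k<n. of_int (m k) * x k)"
      by (simp add: right_diff_distrib sum_subtractf)
    also have "(\<Sum>k<n. of_int (m k) * x ((k + 1) mod n)) = (\<Sum>v<n. of_int (m ((v + n - 1) mod n)) * x v)"
      by (rule sum_cyclic_shift[OF assms])
    finally show ?thesis by (simp add: left_diff_distrib sum_subtractf)
  qed
  have "(\<integral>x. (\<Prod>k<n. \<Sum>m\<in>{-N..N}. b k m * e2pi (of_int m * (x ((k + 1) mod n) - x k))) \<partial>unit_cube {..<n})
      = (\<integral>x. (\<Sum>m\<in>?P. (\<Prod>k<n. b k (m k)) * e2pi (0 + (\<Sum>v<n. of_int (m ((v + n - 1) mod n) - m v) * x v))) \<partial>unit_cube {..<n})"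
    by (simp only: prod_sum_e2pi_expand[OF finite_lessThan finite_atLeastAtMost_int] phase)
  also have "\<dots> = (\<Sum>m\<in>?P. if \<forall>v\<in>{..<n}. m ((v + n - 1) mod n) - m v = 0 then \<Prod>k<n. b k (m k) else 0)"
    by (rule trans[OF integral_unit_cube_trig_sum]) (simp_all add: finite_PiE cong: if_cong)
  also have "\<dots> = (\<Sum>c\<in>{-N..N}. \<Prod>k<n. b k ((\<lambda>k\<in>{..<n}. c) k))"
    by (rule sum_PiE_if_constant) (use assms in \<open>auto simp: cyclic_invariant_iff_constant[OF assms, simplified]\<close>)
  also have "\<dots> = (\<Sum>c\<in>{-N..N}. \<Prod>k<n. b k c)" by simp
  finally show ?thesis .
qed

(* The lattice curl of the gauge field (x^a, x^b) around the plaquette p = (i, j), indices mod L. *)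
definition plaquette :: "nat \<Rightarrow> (nat \<times> nat \<Rightarrow> real) \<Rightarrow> (nat \<times> nat \<Rightarrow> real) \<Rightarrow> nat \<times> nat \<Rightarrow> real" where
  "plaquette L xa xb p = xa p - xa (fst p, (snd p + 1) mod L) - xb p + xb ((fst p + 1) mod L, snd p)"

lemma plaquette_neighbours_in_grid:
  assumes "p \<in> {..<L::nat} \<times> {..<L}"
  shows "(fst p, (snd p + 1) mod L) \<in> {..<L} \<times> {..<L}" "((fst p + 1) mod L, snd p) \<in> {..<L} \<times> {..<L}"
proof -
  have "0 < L" using assms by (cases p) auto
  then show "(fst p, (snd p + 1) mod L) \<in> {..<L} \<times> {..<L}" "((fst p + 1) mod L, snd p) \<in> {..<L} \<times> {..<L}"
    using assms by auto
qed

lemma sum_grid_shift_fst: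
  assumes "0 < (L::nat)"
  shows "(\<Sum>p\<in>{..<L} \<times> {..<L}. g p (h ((fst p + 1) mod L, snd p)))
       = (\<Sum>p\<in>{..<L} \<times> {..<L}. g ((fst p + L - 1) mod L, snd p) (h p))"
  by (rule sum.reindex_bij_witness[of _ "\<lambda>p. ((fst p + L - 1) mod L, snd p)" "\<lambda>p. ((fst p + 1) mod L, snd p)"])
     (use assms mod_succ_pred[of _ L] mod_pred_succ[of _ L] in auto)

lemma sum_grid_shift_snd:
  assumes "0 < (L::nat)"
  shows "(\<Sum>p\<in>{..<L} \<times> {..<L}. g p (h (fst p, (snd p + 1) mod L)))
       = (\<Sum>p\<in>{..<L} \<times> {..<L}. g (fst p, (snd p + L - 1) mod L) (h p))"
  by (rule sum.reindex_bij_witness[of _ "\<lambda>p. (fst p, (snd p + L - 1) mod L)" "\<lambda>p. (fst p, (snd p + 1) mod L)"])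
     (use assms mod_succ_pred[of _ L] mod_pred_succ[of _ L] in auto)

lemma grid_invariant_iff_constant:
  assumes "0 < (L::nat)"
  defines "K \<equiv> {..<L} \<times> {..<L}"
  shows "((\<forall>p\<in>K. m ((fst p + L - 1) mod L, snd p) = m p) \<and> (\<forall>p\<in>K. m p = m (fst p, (snd p + L - 1) mod L)))
     \<longleftrightarrow> (\<forall>p\<in>K. \<forall>q\<in>K. m p = m q)"
proof
  assume H: "(\<forall>p\<in>K. m ((fst p + L - 1) mod L, snd p) = m p) \<and> (\<forall>p\<in>K. m p = m (fst p, (snd p + L - 1) mod L))"
  have row: "m (i, j) = m (i, 0)" if "i < L" "j < L" for i j
  proof (rule cyclic_invariant_imp_constant[of L "\<lambda>j. m (i, j)"])
    show "\<forall>v<L. m (i, (v + L - 1) mod L) = m (i, v)"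
    proof (intro allI impI)
      fix v assume "v < L"
      then have "(i, v) \<in> K" using that by (simp add: K_def)
      then show "m (i, (v + L - 1) mod L) = m (i, v)"
        using H[THEN conjunct2, rule_format, of "(i, v)"] by simp
    qed
  qed (fact that(2))
  have col: "m (i, 0) = m (0, 0)" if "i < L" for i
  proof (rule cyclic_invariant_imp_constant[of L "\<lambda>i. m (i, 0)"])
    show "\<forall>v<L. m ((v + L - 1) mod L, 0) = m (v, 0)"
    proof (intro allI impI)
      fix v assume "v < L"
      then have "(v, 0) \<in> K" using assms by (simp add: K_def)
      then show "m ((v + L - 1) mod L, 0) = m (v, 0)"
        using H[THEN conjunct1, rule_format, of "(v, 0)"] by simp
    qed
  qed (fact that)
  have const: "m p = m (0, 0)" if "p \<in> K" for p
  proof -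
    obtain i j where ij: "p = (i, j)" "i < L" "j < L" using \<open>p \<in> K\<close> by (auto simp: K_def)
    show ?thesis using row[OF ij(2,3)] col[OF ij(2)] ij(1) by simp
  qed
  show "\<forall>p\<in>K. \<forall>q\<in>K. m p = m q"
    using const by (intro ballI) (simp only:)
next
  assume H: "\<forall>p\<in>K. \<forall>q\<in>K. m p = m q"
  have "((fst p + L - 1) mod L, snd p) \<in> K" "(fst p, (snd p + L - 1) mod L) \<in> K" if "p \<in> K" for p
    using that assms unfolding K_def by (cases p, simp)+
  then show "(\<forall>p\<in>K. m ((fst p + L - 1) mod L, snd p) = m p) \<and> (\<forall>p\<in>K. m p = m (fst p, (snd p + L - 1) mod L))"
    using H[rule_format] by metis
qed

lemma integral_plaquette_trig_poly:
  assumes L: "0 < (L::nat)"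
  defines "K \<equiv> {..<L} \<times> {..<L}"
  shows "(\<integral>xa. (\<integral>xb. (\<Prod>p\<in>K. \<Sum>m\<in>{-N..N}. a p m * e2pi (of_int m * plaquette L xa xb p))
           \<partial>unit_cube K) \<partial>unit_cube K)
       = (\<Sum>c\<in>{-N..N}. \<Prod>p\<in>K. a p c)"
proof -
  have finK: "finite K" unfolding K_def by simp
  let ?P = "PiE K (\<lambda>_. {-N..N})"
  define C where "C m = (\<Prod>p\<in>K. a p (m p))" for m
  \<comment> \<open>Coefficients of xa p and xb p after summation by parts on the periodic grid.\<close>
  define \<kappa>a where "\<kappa>a m p = m p - m (fst p, (snd p + L - 1) mod L)" for m :: "nat \<times> nat \<Rightarrow> int" and p
  define \<kappa>b where "\<kappa>b m p = m ((fst p + L - 1) mod L, snd p) - m p" for m :: "nat \<times> nat \<Rightarrow> int" and p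
  define \<phi> where "\<phi> m xa = (\<Sum>p\<in>K. of_int (\<kappa>a m p) * xa p :: real)" for m xa
  have phase: "(\<Sum>p\<in>K. of_int (m p) * plaquette L xa xb p) = \<phi> m xa + (\<Sum>p\<in>K. of_int (\<kappa>b m p) * xb p)"
    for m xa xb
    using sum_grid_shift_fst[OF L, of "\<lambda>p y. of_int (m p) * y" xb]
      sum_grid_shift_snd[OF L, of "\<lambda>p y. of_int (m p) * y" xa]
    unfolding \<phi>_def \<kappa>a_def \<kappa>b_def K_def plaquette_def
    by (simp add: algebra_simps sum.distrib sum_subtractf)
  have inner: "(\<integral>xb. (\<Sum>m\<in>?P. C m * e2pi (\<phi> m xa + (\<Sum>p\<in>K. of_int (\<kappa>b m p) * xb p))) \<partial>unit_cube K)
      = (\<Sum>m\<in>?P. (if \<forall>p\<in>K. \<kappa>b m p = 0 then C m else 0) * e2pi (0 + (\<Sum>p\<in>K. of_int (\<kappa>a m p) * xa p)))" for xa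
    by (auto simp: integral_unit_cube_trig_sum finK finite_PiE \<phi>_def intro!: sum.cong)
  have "(\<integral>xa. (\<Sum>m\<in>?P. (if \<forall>p\<in>K. \<kappa>b m p = 0 then C m else 0) * e2pi (0 + (\<Sum>p\<in>K. of_int (\<kappa>a m p) * xa p))) \<partial>unit_cube K)
      = (\<Sum>m\<in>?P. if (\<forall>p\<in>K. \<kappa>a m p = 0) \<and> (\<forall>p\<in>K. \<kappa>b m p = 0) then C m else 0)"
    by (rule trans[OF integral_unit_cube_trig_sum]) (auto simp: finK finite_PiE intro!: sum.cong)
  also have "\<dots> = (\<Sum>c\<in>{-N..N}. C (\<lambda>p\<in>K. c))"
  proof (rule sum_PiE_if_constant[OF finK _ finite_atLeastAtMost_int])
    show "K \<noteq> {}" using L by (auto simp: K_def)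
    fix m
    have "(\<forall>p\<in>K. \<kappa>a m p = 0) \<longleftrightarrow> (\<forall>p\<in>K. m p = m (fst p, (snd p + L - 1) mod L))"
      "(\<forall>p\<in>K. \<kappa>b m p = 0) \<longleftrightarrow> (\<forall>p\<in>K. m ((fst p + L - 1) mod L, snd p) = m p)"
      unfolding \<kappa>a_def \<kappa>b_def by simp_all
    then show "((\<forall>p\<in>K. \<kappa>a m p = 0) \<and> (\<forall>p\<in>K. \<kappa>b m p = 0)) \<longleftrightarrow> (\<forall>p\<in>K. \<forall>q\<in>K. m p = m q)"
      using grid_invariant_iff_constant[OF L, of m] unfolding K_def by (simp only: conj_commute)
  qed
  also have "\<dots> = (\<Sum>c\<in>{-N..N}. \<Prod>p\<in>K. a p c)" by (simp add: C_def)
  finally show ?thesis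
    by (simp only: prod_sum_e2pi_expand[OF finK finite_atLeastAtMost_int] phase C_def[symmetric] inner)
qed

section \<open>Absolutely convergent Fourier series\<close>

definition fourier_partial_sum :: "(int \<Rightarrow> complex) \<Rightarrow> nat \<Rightarrow> real \<Rightarrow> complex" where
  "fourier_partial_sum c N t = (\<Sum>m\<in>{- int N..int N}. c m * e2pi (of_int m * t))"

definition fourier_series :: "(int \<Rightarrow> complex) \<Rightarrow> real \<Rightarrow> complex" where
  "fourier_series c t = infsum (\<lambda>m. c m * e2pi (of_int m * t)) UNIV"

lemma borel_measurable_fourier_partial_sum [measurable]:
  "fourier_partial_sum c N \<in> borel_measurable borel"
  unfolding fourier_partial_sum_def by measurable

lemma fourier_series_plus_int: "fourier_series c (t + of_int k) = fourier_series c t"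
proof -
  have "e2pi (of_int m * (t + of_int k)) = e2pi (of_int m * t)" for m
    using e2pi_eq_1_iff[of "of_int (m * k)"] by (simp add: distrib_left e2pi_add)
  then show ?thesis unfolding fourier_series_def by simp
qed

context
  fixes c :: "int \<Rightarrow> complex"
  assumes abs_summable: "(\<lambda>m. norm (c m)) summable_on UNIV"
begin

lemma fourier_series_has_sum: "((\<lambda>m. c m * e2pi (of_int m * t)) has_sum fourier_series c t) UNIV"
proof -
  have "(\<lambda>m. norm (c m * e2pi (of_int m * t))) summable_on UNIV"
    using abs_summable by (simp add: norm_mult)
  then show ?thesis
    unfolding fourier_series_def by (rule has_sum_infsum[OF abs_summable_summable])
qed

lemma sum_norm_le_infsum_norm: "finite F \<Longrightarrow> (\<Sum>m\<in>F. norm (c m)) \<le> infsum (\<lambda>m. norm (c m)) UNIV"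
  using infsum_mono_neutral[of "\<lambda>m. norm (c m)" F "\<lambda>m. norm (c m)" UNIV] abs_summable by simp

lemma norm_fourier_partial_sum_le: "norm (fourier_partial_sum c N t) \<le> infsum (\<lambda>m. norm (c m)) UNIV"
proof -
  have "norm (fourier_partial_sum c N t) \<le> (\<Sum>m\<in>{- int N..int N}. norm (c m))"
    unfolding fourier_partial_sum_def using norm_sum[of "\<lambda>m. c m * e2pi (of_int m * t)"]
    by (simp add: norm_mult)
  also have "\<dots> \<le> infsum (\<lambda>m. norm (c m)) UNIV" by (simp add: sum_norm_le_infsum_norm)
  finally show ?thesis .
qed

lemma fourier_partial_sum_LIMSEQ: "(\<lambda>N. fourier_partial_sum c N t) \<longlonglongrightarrow> fourier_series c t"
proof -
  have "filterlim (\<lambda>N. {- int N..int N}) (finite_subsets_at_top UNIV) sequentially"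
  proof (subst filterlim_finite_subsets_at_top, intro allI impI)
    fix X :: "int set" assume "finite X \<and> X \<subseteq> UNIV"
    then have "\<bar>m\<bar> \<le> (\<Sum>x\<in>X. \<bar>x\<bar>)" if "m \<in> X" for m
      using that by (intro member_le_sum) auto
    then show "\<forall>\<^sub>F N in sequentially. finite {- int N..int N} \<and> X \<subseteq> {- int N..int N} \<and> {- int N..int N} \<subseteq> UNIV"
      by (intro eventually_sequentiallyI[of "nat (\<Sum>x\<in>X. \<bar>x\<bar>)"]) force
  qed
  with fourier_series_has_sum show ?thesis
    unfolding fourier_partial_sum_def has_sum_def by (rule filterlim_compose)
qed

lemma norm_fourier_series_le: "norm (fourier_series c t) \<le> infsum (\<lambda>m. norm (c m)) UNIV"
  using norm_fourier_partial_sum_le by (intro tendsto_upperbound[OF tendsto_norm[OF fourier_partial_sum_LIMSEQ]]) auto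

lemma borel_measurable_fourier_series [measurable]: "fourier_series c \<in> borel_measurable borel"
  by (rule borel_measurable_LIMSEQ_metric[OF borel_measurable_fourier_partial_sum fourier_partial_sum_LIMSEQ])

lemma integral_fourier_series_mult_e2pi:
  "(\<integral>t. fourier_series c t * e2pi (of_int k * t) \<partial>unit_interval_measure) = c (- k)"
proof -
  have partial: "(\<integral>t. fourier_partial_sum c N t * e2pi (of_int k * t) \<partial>unit_interval_measure)
      = (if - k \<in> {- int N..int N} then c (- k) else 0)" for N
  proof -
    have "e2pi (of_int m * t) * e2pi (of_int k * t) = e2pi (of_int (m + k) * t)" for m t
      by (simp add: distrib_right e2pi_add)
    then have "(\<integral>t. fourier_partial_sum c N t * e2pi (of_int k * t) \<partial>unit_interval_measure)
        = (\<integral>t. (\<Sum>m\<in>{- int N..int N}. c m * e2pi (of_int (m + k) * t)) \<partial>unit_interval_measure)"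
      unfolding fourier_partial_sum_def by (simp add: sum_distrib_right mult.assoc)
    also have "\<dots> = (\<Sum>m\<in>{- int N..int N}. c m * (if m + k = 0 then 1 else 0))"
      by (simp only: Bochner_Integration.integral_sum integrable_e2pi_unit_interval
          integrable_mult_right integral_mult_right_zero integral_e2pi_unit_interval)
    also have "\<dots> = (\<Sum>m\<in>{- int N..int N}. if m = - k then c m else 0)"
      by (intro sum.cong) auto
    finally show ?thesis by simp
  qed
  have "(\<lambda>N. \<integral>t. fourier_partial_sum c N t * e2pi (of_int k * t) \<partial>unit_interval_measure) \<longlonglongrightarrow> c (- k)"
  proof (rule tendsto_eventually, rule eventually_sequentiallyI[of "nat \<bar>k\<bar>"])
    fix N assume "nat \<bar>k\<bar> \<le> N"
    then have "- k \<in> {- int N..int N}" by auto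
    then show "(\<integral>t. fourier_partial_sum c N t * e2pi (of_int k * t) \<partial>unit_interval_measure) = c (- k)"
      by (simp only: partial if_True)
  qed
  moreover have "(\<lambda>N. \<integral>t. fourier_partial_sum c N t * e2pi (of_int k * t) \<partial>unit_interval_measure)
      \<longlonglongrightarrow> (\<integral>t. fourier_series c t * e2pi (of_int k * t) \<partial>unit_interval_measure)"
    by (rule integral_dominated_convergence[where w = "\<lambda>_. infsum (\<lambda>m. norm (c m)) UNIV"])
       (auto intro!: borel_measurable_unit_interval tendsto_mult fourier_partial_sum_LIMSEQ
          simp: norm_mult norm_fourier_partial_sum_le)
  ultimately show ?thesis by (rule LIMSEQ_unique[rotated])
qed

end

section \<open>Uniqueness of Fourier coefficients\<close>

lemma integrable_mult_continuous_unit_interval: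
  fixes h \<phi> :: "real \<Rightarrow> complex"
  assumes h: "integrable unit_interval_measure h" and \<phi>: "continuous_on UNIV \<phi>"
  shows "integrable unit_interval_measure (\<lambda>t. h t * \<phi> t)"
proof -
  have "compact (\<phi> ` {0..1})"
    by (rule compact_continuous_image) (use \<phi> continuous_on_subset in auto)
  then obtain B where B: "\<And>t. t \<in> {0..1} \<Longrightarrow> norm (\<phi> t) \<le> B"
    by (meson compact_imp_bounded bounded_iff image_eqI)
  show ?thesis
  proof (rule Bochner_Integration.integrable_bound[where f = "\<lambda>t. of_real \<bar>B\<bar> * h t"])
    show "(\<lambda>t. h t * \<phi> t) \<in> borel_measurable unit_interval_measure"
      using borel_measurable_times[OF borel_measurable_integrable[OF h]
          borel_measurable_unit_interval[OF borel_measurable_continuous_onI[OF \<phi>]]] .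
    show "AE t in unit_interval_measure. norm (h t * \<phi> t) \<le> norm (of_real \<bar>B\<bar> * h t)"
      using B by (intro AE_I2) (force simp: norm_mult mult.commute intro!: mult_right_mono)
  qed (use h in simp)
qed

(* Repeated frequencies are allowed, so products need no collection of terms. *)
fun trig_poly :: "(int \<times> complex) list \<Rightarrow> real \<Rightarrow> complex" where
  "trig_poly [] t = 0"
| "trig_poly (p # xs) t = snd p * e2pi (of_int (fst p) * t) + trig_poly xs t"

lemma continuous_on_trig_poly: "continuous_on S (trig_poly xs)"
  by (induction xs) (auto intro!: continuous_intros)

lemma trig_poly_append: "trig_poly (xs @ ys) t = trig_poly xs t + trig_poly ys t"
  by (induction xs) auto

lemma trig_poly_mult:
  "trig_poly (concat (map (\<lambda>p. map (\<lambda>q. (fst p + fst q, snd p * snd q)) ys) xs)) t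
     = trig_poly xs t * trig_poly ys t"
proof -
  have shift: "trig_poly (map (\<lambda>q. (k + fst q, a * snd q)) ys) t = a * e2pi (of_int k * t) * trig_poly ys t"
    for k a by (induction ys) (auto simp: algebra_simps e2pi_add)
  show ?thesis by (induction xs) (auto simp: trig_poly_append shift algebra_simps)
qed

lemma polynomial_function_e2pi_eq_trig_poly:
  assumes "real_polynomial_function g"
  shows "\<exists>xs. \<forall>t. complex_of_real (g (e2pi t)) = trig_poly xs t"
  using assms
proof (induction g rule: real_polynomial_function.induct)
  case (linear g)
  then interpret bounded_linear g .
  have g: "g z = Re z * g 1 + Im z * g \<i>" for z
  proof -
    have "z = Re z *\<^sub>R 1 + Im z *\<^sub>R \<i>" by (simp add: complex_eq_iff)
    then have "g z = g (Re z *\<^sub>R 1 + Im z *\<^sub>R \<i>)" by (rule arg_cong)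
    then show ?thesis by (simp add: add scale)
  qed
  have re: "complex_of_real (Re (e2pi t)) = (e2pi t + e2pi (- t)) / 2"
    and im: "complex_of_real (Im (e2pi t)) = (e2pi t - e2pi (- t)) / (2 * \<i>)" for t
    using complex_add_cnj[of "e2pi t"] complex_diff_cnj[of "e2pi t"] by (simp_all add: cnj_e2pi field_simps)
  let ?A = "complex_of_real (g 1)" and ?B = "complex_of_real (g \<i>)"
  have "complex_of_real (g (e2pi t)) = trig_poly [(1, ?A / 2 + ?B / (2 * \<i>)), (-1, ?A / 2 - ?B / (2 * \<i>))] t" for t
  proof -
    have "complex_of_real (g (e2pi t)) = complex_of_real (Re (e2pi t)) * ?A + complex_of_real (Im (e2pi t)) * ?B"
      using g[of "e2pi t"] by simp
    also have "\<dots> = (e2pi t + e2pi (- t)) / 2 * ?A + (e2pi t - e2pi (- t)) / (2 * \<i>) * ?B"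
      unfolding re im ..
    also have "\<dots> = trig_poly [(1, ?A / 2 + ?B / (2 * \<i>)), (-1, ?A / 2 - ?B / (2 * \<i>))] t"
      by (simp add: field_simps)
    finally show ?thesis .
  qed
  then show ?case by blast
next
  case (const c)
  have "complex_of_real c = trig_poly [(0, complex_of_real c)] t" for t by simp
  then show ?case by blast
next
  case (add f g)
  then obtain xs ys where "\<forall>t. complex_of_real (f (e2pi t)) = trig_poly xs t"
    "\<forall>t. complex_of_real (g (e2pi t)) = trig_poly ys t" by blast
  then have "complex_of_real (f (e2pi t) + g (e2pi t)) = trig_poly (xs @ ys) t" for t
    by (simp add: trig_poly_append)
  then show ?case by blast
next
  case (mult f g)
  then obtain xs ys where "\<forall>t. complex_of_real (f (e2pi t)) = trig_poly xs t"
    "\<forall>t. complex_of_real (g (e2pi t)) = trig_poly ys t" by blast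
  then have "complex_of_real (f (e2pi t) * g (e2pi t))
      = trig_poly (concat (map (\<lambda>p. map (\<lambda>q. (fst p + fst q, snd p * snd q)) ys) xs)) t" for t
    by (simp add: trig_poly_mult)
  then show ?case by blast
qed

lemma e2pi_eq_imp_eq:
  assumes "\<bar>t - s\<bar> < 1" and "e2pi t = e2pi s"
  shows "t = s"
proof -
  have "e2pi (t - s) = 1" using assms(2) by (simp add: e2pi_diff)
  then obtain n :: int where n: "t - s = of_int n" by (auto simp: e2pi_eq_1_iff elim: Ints_cases)
  then have "\<bar>n\<bar> < 1" using assms(1) by linarith
  then show ?thesis using n by simp
qed

lemma infdist_bump_LIMSEQ_indicator:
  assumes ab: "0 < a" "a \<le> b" "b < 1" and t: "t \<in> {0..1}"
  shows "(\<lambda>n. max 0 (1 - real n * infdist (e2pi t) (e2pi ` {a..b}))) \<longlonglongrightarrow> indicator {a..b} t"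
proof (cases "t \<in> {a..b}")
  case False
  define A where "A = e2pi ` {a..b}"
  have "closed A" "A \<noteq> {}"
    unfolding A_def using ab by (auto intro!: compact_imp_closed compact_continuous_image continuous_intros)
  moreover have "e2pi t \<notin> A"
  proof
    assume "e2pi t \<in> A"
    then obtain s where "s \<in> {a..b}" "e2pi t = e2pi s" unfolding A_def by auto
    moreover have "\<bar>t - s\<bar> < 1" using t \<open>s \<in> {a..b}\<close> ab by auto
    ultimately show False using False e2pi_eq_imp_eq by blast
  qed
  ultimately have d: "infdist (e2pi t) A > 0" by (simp add: infdist_pos_not_in_closed)
  obtain n0 :: nat where n0: "1 / infdist (e2pi t) A < real n0" using reals_Archimedean2 by blast
  have "max 0 (1 - real n * infdist (e2pi t) A) = 0" if "n0 \<le> n" for n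
  proof -
    have "1 / infdist (e2pi t) A < real n" using n0 that by linarith
    then have "1 < real n * infdist (e2pi t) A" using d by (simp add: field_simps)
    then show ?thesis by simp
  qed
  then show ?thesis
    using False unfolding A_def by (intro tendsto_eventually eventually_sequentiallyI[of n0]) simp
qed simp

context
  fixes h :: "real \<Rightarrow> complex"
  assumes integrable: "integrable unit_interval_measure h"
    and coeffs_zero: "\<And>k::int. (\<integral>t. h t * e2pi (of_int k * t) \<partial>unit_interval_measure) = 0"
begin

lemma integral_mult_trig_poly_eq_0: "(\<integral>t. h t * trig_poly xs t \<partial>unit_interval_measure) = 0"
proof (induction xs)
  case (Cons p xs)
  have "integrable unit_interval_measure (\<lambda>t. h t * e2pi (of_int (fst p) * t))"
    "integrable unit_interval_measure (\<lambda>t. h t * trig_poly xs t)"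
    by (auto intro!: integrable_mult_continuous_unit_interval[OF integrable] continuous_intros
        continuous_on_trig_poly)
  then show ?case
    using Cons coeffs_zero[of "fst p"] by (simp add: distrib_left mult.left_commute)
qed simp

lemma norm_integral_mult_continuous_on_circle_le:
  fixes \<psi> :: "complex \<Rightarrow> real"
  assumes \<psi>: "continuous_on (sphere 0 1) \<psi>" and \<epsilon>: "\<epsilon> > 0"
  shows "norm (\<integral>t. h t * complex_of_real (\<psi> (e2pi t)) \<partial>unit_interval_measure)
           \<le> \<epsilon> * (\<integral>t. norm (h t) \<partial>unit_interval_measure)"
proof -
  obtain g where g: "real_polynomial_function g" "\<And>z. z \<in> sphere 0 1 \<Longrightarrow> \<bar>\<psi> z - g z\<bar> < \<epsilon>"
    using Stone_Weierstrass_real_polynomial_function[OF compact_sphere \<psi> \<epsilon>] by blast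
  obtain xs where xs: "\<And>t. complex_of_real (g (e2pi t)) = trig_poly xs t"
    using polynomial_function_e2pi_eq_trig_poly[OF g(1)] by blast
  define D where "D t = complex_of_real (\<psi> (e2pi t)) - trig_poly xs t" for t
  have D: "norm (D t) \<le> \<epsilon>" for t
    using g(2)[of "e2pi t"] unfolding D_def xs[symmetric] by (simp flip: of_real_diff)
  have "continuous_on UNIV (\<lambda>t. complex_of_real (\<psi> (e2pi t)))"
    by (intro continuous_intros continuous_on_compose2[OF \<psi>]) (auto intro!: continuous_intros)
  then have iD: "integrable unit_interval_measure (\<lambda>t. h t * D t)"
    unfolding D_def by (intro integrable_mult_continuous_unit_interval[OF integrable]
        continuous_on_diff continuous_on_trig_poly)
  have itp: "integrable unit_interval_measure (\<lambda>t. h t * trig_poly xs t)"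
    by (rule integrable_mult_continuous_unit_interval[OF integrable continuous_on_trig_poly])
  have "(\<integral>t. h t * complex_of_real (\<psi> (e2pi t)) \<partial>unit_interval_measure)
      = (\<integral>t. h t * D t + h t * trig_poly xs t \<partial>unit_interval_measure)"
    by (simp add: D_def algebra_simps)
  also have "\<dots> = (\<integral>t. h t * D t \<partial>unit_interval_measure)"
    using iD itp by (simp add: integral_mult_trig_poly_eq_0)
  finally have "norm (\<integral>t. h t * complex_of_real (\<psi> (e2pi t)) \<partial>unit_interval_measure)
      \<le> (\<integral>t. norm (h t * D t) \<partial>unit_interval_measure)"
    by (simp add: integral_norm_bound)
  also have "\<dots> \<le> (\<integral>t. \<epsilon> * norm (h t) \<partial>unit_interval_measure)"
  proof (rule integral_mono[OF integrable_norm[OF iD]])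
    show "integrable unit_interval_measure (\<lambda>t. \<epsilon> * norm (h t))" using integrable by simp
    show "norm (h t * D t) \<le> \<epsilon> * norm (h t)" for t
      using mult_left_mono[OF D[of t] norm_ge_zero[of "h t"]] by (simp add: norm_mult mult.commute)
  qed
  finally show ?thesis by simp
qed

lemma integral_mult_continuous_on_circle_eq_0:
  fixes \<psi> :: "complex \<Rightarrow> real"
  assumes \<psi>: "continuous_on (sphere 0 1) \<psi>"
  shows "(\<integral>t. h t * complex_of_real (\<psi> (e2pi t)) \<partial>unit_interval_measure) = 0"
proof -
  define A where "A = (\<integral>t. norm (h t) \<partial>unit_interval_measure)"
  have A: "0 \<le> A" unfolding A_def by simp
  have "norm (\<integral>t. h t * complex_of_real (\<psi> (e2pi t)) \<partial>unit_interval_measure) \<le> 0 + e" if "e > 0" for e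
  proof -
    have "e / (A + 1) > 0" using that A by simp
    then have "norm (\<integral>t. h t * complex_of_real (\<psi> (e2pi t)) \<partial>unit_interval_measure) \<le> e / (A + 1) * A"
      unfolding A_def by (rule norm_integral_mult_continuous_on_circle_le[OF \<psi>])
    also have "\<dots> \<le> e" using that A by (simp add: field_simps)
    finally show ?thesis by simp
  qed
  then have "norm (\<integral>t. h t * complex_of_real (\<psi> (e2pi t)) \<partial>unit_interval_measure) \<le> 0"
    by (rule field_le_epsilon)
  then show ?thesis by simp
qed

lemma integral_indicator_mult_eq_0:
  assumes ab: "0 < a" "a \<le> b" "b < 1"
  shows "(\<integral>t. indicator {a..b} t *\<^sub>R h t \<partial>unit_interval_measure) = 0"
proof -
  \<comment> \<open>Continuous functions on the circle decreasing to the indicator of the arc e2pi ` [a, b].\<close>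
  define A where "A = e2pi ` {a..b}"
  define \<psi> where "\<psi> n z = max 0 (1 - real n * infdist z A)" for n :: nat and z :: complex
  have \<psi>_cont: "continuous_on UNIV (\<psi> n)" for n
    unfolding \<psi>_def by (intro continuous_intros)
  have \<psi>_bounds: "0 \<le> \<psi> n z" "\<psi> n z \<le> 1" for n z
    unfolding \<psi>_def using infdist_nonneg[of z A] by auto
  have \<psi>_lim: "(\<lambda>n. \<psi> n (e2pi t)) \<longlonglongrightarrow> indicator {a..b} t" if "t \<in> {0..1}" for t
    unfolding \<psi>_def A_def using ab that by (rule infdist_bump_LIMSEQ_indicator)
  have "(\<lambda>n. \<integral>t. h t * complex_of_real (\<psi> n (e2pi t)) \<partial>unit_interval_measure)
      \<longlonglongrightarrow> (\<integral>t. indicator {a..b} t *\<^sub>R h t \<partial>unit_interval_measure)"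
  proof (rule integral_dominated_convergence[where w = "\<lambda>t. norm (h t)"])
    show "(\<lambda>t. indicator {a..b} t *\<^sub>R h t) \<in> borel_measurable unit_interval_measure"
      by (intro borel_measurable_scaleR[OF _ borel_measurable_integrable[OF integrable]]
          borel_measurable_unit_interval) simp
    show "(\<lambda>t. h t * complex_of_real (\<psi> n (e2pi t))) \<in> borel_measurable unit_interval_measure" for n
      by (intro borel_measurable_times[OF borel_measurable_integrable[OF integrable]]
          borel_measurable_unit_interval borel_measurable_continuous_onI continuous_intros
          continuous_on_compose2[OF \<psi>_cont]) auto
    show "AE t in unit_interval_measure. norm (h t * complex_of_real (\<psi> n (e2pi t))) \<le> norm (h t)" for n
      using \<psi>_bounds[of n] by (intro AE_I2) (simp add: norm_mult mult_left_le)
    show "AE t in unit_interval_measure. (\<lambda>n. h t * complex_of_real (\<psi> n (e2pi t))) \<longlonglongrightarrow> indicator {a..b} t *\<^sub>R h t"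
      using \<psi>_lim by (intro AE_I2) (auto simp: scaleR_conv_of_real mult.commute intro!: tendsto_mult tendsto_of_real)
  qed (use integrable in simp)
  moreover have "(\<integral>t. h t * complex_of_real (\<psi> n (e2pi t)) \<partial>unit_interval_measure) = 0" for n
    by (rule integral_mult_continuous_on_circle_eq_0) (rule continuous_on_subset[OF \<psi>_cont], simp)
  ultimately show ?thesis by (simp add: LIMSEQ_const_iff)
qed

lemma fourier_coeffs_zero_imp_AE_zero: "AE t in unit_interval_measure. h t = 0"
proof -
  \<comment> \<open>At a Lebesgue point x in (0,1) the averages of h over [x, x + \<delta>] tend to h x,
    but by integral_indicator_mult_eq_0 they all vanish.\<close>
  define h' where "h' t = indicator {0..1} t *\<^sub>R h t" for t
  have "integrable lborel h'"
    using integrable unfolding unit_interval_measure_def h'_def by (subst (asm) integrable_restrict_space) auto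
  then have h'_set_integrable: "set_integrable lborel S h'" if "S \<in> sets lborel" for S
    unfolding set_integrable_def using that by (rule integrable_mult_indicator[rotated])
  obtain N where N: "negligible N"
    and lebesgue_point: "\<And>x e. \<lbrakk>x \<notin> N; 0 < e\<rbrakk> \<Longrightarrow> \<exists>d>0. \<forall>\<delta>. 0 < \<delta> \<and> \<delta> < d \<longrightarrow>
        norm (integral (cbox x (x + \<delta> *\<^sub>R One)) h' /\<^sub>R \<delta> ^ DIM(real) - h' x) < e"
    using integrable_ccontinuous_explicit[of h'] set_borel_integral_eq_integral(1)[OF h'_set_integrable]
    by (metis sets_lborel borel_closed closed_cbox)
  have zero: "h x = 0" if x: "0 < x" "x < 1" "x \<notin> N" for x
  proof (rule ccontr)
    assume "h x \<noteq> 0"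
    then obtain d where d: "d > 0" and dp: "\<And>\<delta>. 0 < \<delta> \<Longrightarrow> \<delta> < d \<Longrightarrow>
        norm (integral (cbox x (x + \<delta> *\<^sub>R One)) h' /\<^sub>R \<delta> ^ DIM(real) - h' x) < norm (h x)"
      using lebesgue_point[OF x(3), of "norm (h x)"] by auto
    define \<delta> where "\<delta> = min (d / 2) ((1 - x) / 2)"
    have "0 < \<delta>" unfolding \<delta>_def using d x by simp
    moreover have "\<delta> < d" unfolding \<delta>_def using d by linarith
    moreover have "x + \<delta> < 1" unfolding \<delta>_def using x(2) by (simp add: min_def field_simps)
    ultimately have \<delta>: "0 < \<delta>" "\<delta> < d" "x + \<delta> < 1" by blast+
    have "integral {x..x + \<delta>} h' = (LINT t:{x..x + \<delta>}|lborel. h' t)"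
      by (rule set_borel_integral_eq_integral(2)[OF h'_set_integrable, symmetric]) simp
    also have "\<dots> = (\<integral>t. indicator {x..x + \<delta>} t *\<^sub>R h t \<partial>unit_interval_measure)"
      unfolding set_lebesgue_integral_def unit_interval_measure_def h'_def
      by (subst integral_restrict_space) (auto intro!: Bochner_Integration.integral_cong split: split_indicator)
    also have "\<dots> = 0" by (rule integral_indicator_mult_eq_0) (use x \<delta> in auto)
    finally have "integral (cbox x (x + \<delta> *\<^sub>R One)) h' = 0" by simp
    moreover have "h' x = h x" unfolding h'_def using x by simp
    ultimately show False using dp[OF \<delta>(1,2)] by simp
  qed
  have "AE x in lborel. x \<notin> N"
    using N AE_not_in[of N lebesgue] by (simp add: negligible_iff_null_sets AE_completion_iff)
  then have "AE x in lborel. x \<in> {0..1} \<longrightarrow> h x = 0"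
    using AE_lborel_singleton[of 0] AE_lborel_singleton[of 1] by eventually_elim (auto intro: zero)
  then show ?thesis unfolding unit_interval_measure_def by (subst AE_restrict_space_iff) auto
qed

end

lemma periodic_plus_int:
  assumes "\<And>x. g (x + 1) = g (x::real)"
  shows "g (x + of_int n) = g x"
proof -
  have nat: "g (y + of_nat m) = g y" for y m
  proof (induction m)
    case (Suc m)
    have "y + real (Suc m) = (y + real m) + 1" by simp
    then show ?case using assms[of "y + real m"] Suc by (simp only:)
  qed simp
  show ?thesis
  proof (cases "n \<ge> 0")
    case True
    then show ?thesis using nat[of x "nat n"] by simp
  next
    case False
    then show ?thesis using nat[of "x + of_int n" "nat (- n)"] by simp
  qed
qed

lemma fourier_coeff_eq_integral:
  "fourier_coeff f m = (\<integral>t. complex_of_real (f t) * e2pi (of_int (- m) * t) \<partial>unit_interval_measure)"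
  unfolding fourier_coeff_def integral_unit_interval e2pi_def by (simp add: mult_ac)

lemma abs_conv_fourier_AE_eq_fourier_series:
  assumes g: "abs_conv_fourier g"
  shows "AE t in unit_interval_measure. complex_of_real (g t) = fourier_series (fourier_coeff g) t"
proof -
  define c where "c = fourier_coeff g"
  have S: "(\<lambda>m. norm (c m)) summable_on UNIV" and "set_integrable lborel {0..1} g"
    using g unfolding abs_conv_fourier_def c_def by auto
  then have g_int: "integrable unit_interval_measure (\<lambda>t. complex_of_real (g t))"
    by (simp add: integrable_unit_interval_iff[symmetric])
  have F_int: "integrable unit_interval_measure (\<lambda>t. fourier_series c t * \<phi> t)"
    if "continuous_on UNIV \<phi>" "\<And>t. norm (\<phi> t) = 1" for \<phi> :: "real \<Rightarrow> complex"
    using that norm_fourier_series_le[OF S] borel_measurable_unit_interval[OF borel_measurable_times[OF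
        borel_measurable_fourier_series[OF S] borel_measurable_continuous_onI[OF that(1)]]]
    by (intro unit_interval.integrable_const_bound[where B = "infsum (\<lambda>m. norm (c m)) UNIV"])
       (auto simp: norm_mult)
  define h where "h t = complex_of_real (g t) - fourier_series c t" for t
  have "(\<integral>t. h t * e2pi (of_int k * t) \<partial>unit_interval_measure) = 0" for k :: int
  proof -
    have "integrable unit_interval_measure (\<lambda>t. complex_of_real (g t) * e2pi (of_int k * t))"
      by (intro integrable_mult_continuous_unit_interval[OF g_int] continuous_intros)
    moreover have "integrable unit_interval_measure (\<lambda>t. fourier_series c t * e2pi (of_int k * t))"
      by (intro F_int continuous_intros) simp
    ultimately have "(\<integral>t. h t * e2pi (of_int k * t) \<partial>unit_interval_measure)
        = (\<integral>t. complex_of_real (g t) * e2pi (of_int k * t) \<partial>unit_interval_measure)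
          - (\<integral>t. fourier_series c t * e2pi (of_int k * t) \<partial>unit_interval_measure)"
      unfolding h_def left_diff_distrib by (rule Bochner_Integration.integral_diff)
    also have "(\<integral>t. complex_of_real (g t) * e2pi (of_int k * t) \<partial>unit_interval_measure) = c (- k)"
      unfolding c_def fourier_coeff_eq_integral by simp
    also have "(\<integral>t. fourier_series c t * e2pi (of_int k * t) \<partial>unit_interval_measure) = c (- k)"
      by (rule integral_fourier_series_mult_e2pi[OF S])
    finally show ?thesis by simp
  qed
  moreover have "integrable unit_interval_measure h"
    using g_int F_int[of "\<lambda>_. 1"] unfolding h_def by simp
  ultimately have "AE t in unit_interval_measure. h t = 0"
    by (intro fourier_coeffs_zero_imp_AE_zero)
  then show ?thesis unfolding h_def c_def by simp
qed

lemma abs_conv_fourier_null_sets_ne_fourier_series: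
  assumes g: "abs_conv_fourier g"
  shows "{t. complex_of_real (g t) \<noteq> fourier_series (fourier_coeff g) t} \<in> null_sets lborel"
proof -
  define E where "E = {t. complex_of_real (g t) \<noteq> fourier_series (fourier_coeff g) t}"
  have S: "(\<lambda>m. norm (fourier_coeff g m)) summable_on UNIV"
    and [measurable]: "g \<in> borel_measurable borel" and periodic: "\<And>x. g (x + 1) = g x"
    using g unfolding abs_conv_fourier_def by auto
  note borel_measurable_fourier_series[OF S, measurable]
  have [measurable]: "E \<in> sets borel" unfolding E_def by measurable
  have E_shift: "t + of_int n \<in> E \<longleftrightarrow> t \<in> E" for t n
    unfolding E_def by (simp add: periodic_plus_int[of g, OF periodic] fourier_series_plus_int)
  have "AE t in lborel. t \<in> {0..1} \<longrightarrow> t \<notin> E"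
    using abs_conv_fourier_AE_eq_fourier_series[OF g]
    unfolding unit_interval_measure_def E_def by (subst (asm) AE_restrict_space_iff) auto
  then have "AE t in lborel. of_int n + t \<in> {of_int n..of_int n + 1} \<longrightarrow> of_int n + t \<notin> E" for n :: int
    by eventually_elim (auto simp: E_shift add.commute[of "of_int n"])
  then have "AE t in lborel. t \<in> {of_int n..of_int n + 1} \<longrightarrow> t \<notin> E" for n :: int
    by (subst lborel_distr_plus[symmetric, of "of_int n"], subst AE_distr_iff) auto
  then have "AE t in lborel. \<forall>n::int. t \<in> {of_int n..of_int n + 1} \<longrightarrow> t \<notin> E"
    unfolding AE_all_countable by blast
  then have "AE t in lborel. t \<notin> E"
    by eventually_elim (metis atLeastAtMost_iff of_int_floor_le real_of_int_floor_add_one_ge)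
  then show ?thesis unfolding E_def[symmetric] by (subst AE_iff_null_sets) auto
qed

section \<open>Passing to the limit\<close>

lemma AE_unit_interval_translate_not_in:
  assumes "Z \<in> null_sets lborel"
  shows "AE s in unit_interval_measure. s + c \<notin> Z"
proof -
  have "{s. s - (- c) \<in> Z} \<in> null_sets lborel" by (rule null_sets_translation[OF assms])
  then have "AE s in lborel. s \<in> {0..1} \<longrightarrow> s + c \<notin> Z"
    by (rule AE_I') auto
  then show ?thesis
    unfolding unit_interval_measure_def by (subst AE_restrict_space_iff) auto
qed

lemma AE_unit_cube_translate_not_in:
  fixes w :: "('i \<Rightarrow> real) \<Rightarrow> real"
  assumes V: "finite V" "p \<in> V" and Z: "Z \<in> null_sets lborel"
    and w: "w \<in> borel_measurable (unit_cube V)" and w_indep: "\<And>x s. w (x(p := s)) = w x"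
  shows "AE x in unit_cube V. x p + w x \<notin> Z"
proof -
  interpret product_sigma_finite "\<lambda>_::'i. unit_interval_measure"
    by (rule product_sigma_finite_unit_interval)
  define S where "S = (\<lambda>x. x p + w x) -` Z \<inter> space (unit_cube V)"
  have S: "S \<in> sets (unit_cube V)"
    unfolding S_def using Z
    by (intro measurable_sets[OF borel_measurable_add[OF borel_measurable_unit_cube_component[OF V(2)] w]])
       (auto dest: null_setsD2)
  \<comment> \<open>By Tonelli, integrate first over the coordinate p; the fibres of S are translates of Z.\<close>
  have V_insert: "insert p (V - {p}) = V" using V by auto
  have "emeasure (unit_cube V) S = (\<integral>\<^sup>+ x. indicator S x \<partial>unit_cube V)" using S by simp
  also have "\<dots> = (\<integral>\<^sup>+ x. (\<integral>\<^sup>+ s. indicator S (x(p := s)) \<partial>unit_interval_measure) \<partial>Pi\<^sub>M (V - {p}) (\<lambda>_. unit_interval_measure))"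
    using product_nn_integral_insert[of "V - {p}" p "indicator S"] S V
    unfolding unit_cube_def V_insert by simp
  also have "\<dots> = 0"
  proof -
    have "AE s in unit_interval_measure. indicator S (x(p := s)) = (0::ennreal)" for x
      using AE_unit_interval_translate_not_in[OF Z, of "w x"]
      by eventually_elim (simp add: S_def w_indep)
    then have "(\<integral>\<^sup>+ s. indicator S (x(p := s)) \<partial>unit_interval_measure) = (\<integral>\<^sup>+ s. 0 \<partial>unit_interval_measure)" for x
      by (rule nn_integral_cong_AE)
    then show ?thesis by simp
  qed
  finally have "S \<in> null_sets (unit_cube V)" using S by (simp add: null_sets_def)
  then show ?thesis by (rule AE_I') (auto simp: S_def)
qed

lemma integral_prod_fourier_partial_sums_LIMSEQ:
  fixes g :: "'k \<Rightarrow> real \<Rightarrow> real" and u :: "'k \<Rightarrow> 'a \<Rightarrow> real"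
  assumes M: "prob_space M" and I: "finite I"
    and g: "\<And>k. k \<in> I \<Longrightarrow> abs_conv_fourier (g k)"
    and u: "\<And>k. k \<in> I \<Longrightarrow> u k \<in> borel_measurable M"
    and u_null: "\<And>k Z. k \<in> I \<Longrightarrow> Z \<in> null_sets lborel \<Longrightarrow> AE x in M. u k x \<notin> Z"
  shows "(\<lambda>N. \<integral>x. (\<Prod>k\<in>I. fourier_partial_sum (fourier_coeff (g k)) N (u k x)) \<partial>M)
           \<longlonglongrightarrow> complex_of_real (\<integral>x. (\<Prod>k\<in>I. g k (u k x)) \<partial>M)"
proof -
  interpret prob_space M by (rule M)
  define c where "c k = fourier_coeff (g k)" for k
  have S: "(\<lambda>m. norm (c k m)) summable_on UNIV" if "k \<in> I" for k
    using g[OF that] unfolding abs_conv_fourier_def c_def by blast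
  have g_borel: "g k \<in> borel_measurable borel" if "k \<in> I" for k
    using g[OF that] unfolding abs_conv_fourier_def by blast
  have "AE x in M. \<forall>k\<in>I. complex_of_real (g k (u k x)) = fourier_series (c k) (u k x)"
    using I u_null[OF _ abs_conv_fourier_null_sets_ne_fourier_series[OF g]]
    by (subst AE_finite_all) (auto simp: c_def)
  then have "(\<integral>x. (\<Prod>k\<in>I. complex_of_real (g k (u k x))) \<partial>M)
      = (\<integral>x. (\<Prod>k\<in>I. fourier_series (c k) (u k x)) \<partial>M)"
    by (intro integral_cong_AE) (auto intro!: borel_measurable_prod measurable_compose[OF u]
        borel_measurable_fourier_series[OF S] measurable_compose[OF _ borel_measurable_of_real] g_borel)
  moreover have "(\<lambda>N. \<integral>x. (\<Prod>k\<in>I. fourier_partial_sum (c k) N (u k x)) \<partial>M)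
      \<longlonglongrightarrow> (\<integral>x. (\<Prod>k\<in>I. fourier_series (c k) (u k x)) \<partial>M)"
  proof (rule integral_dominated_convergence[where w = "\<lambda>_. \<Prod>k\<in>I. infsum (\<lambda>m. norm (c k m)) UNIV"])
    show "AE x in M. norm (\<Prod>k\<in>I. fourier_partial_sum (c k) N (u k x)) \<le> (\<Prod>k\<in>I. infsum (\<lambda>m. norm (c k m)) UNIV)" for N
      by (intro AE_I2 order_trans[OF norm_prod_le] prod_mono) (auto intro: norm_fourier_partial_sum_le[OF S])
    show "AE x in M. (\<lambda>N. \<Prod>k\<in>I. fourier_partial_sum (c k) N (u k x)) \<longlonglongrightarrow> (\<Prod>k\<in>I. fourier_series (c k) (u k x))"
      by (intro AE_I2 tendsto_prod fourier_partial_sum_LIMSEQ[OF S])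
  qed (auto intro!: borel_measurable_prod measurable_compose[OF u] borel_measurable_fourier_series[OF S])
  ultimately show ?thesis by (simp add: c_def flip: of_real_prod)
qed

lemma cyclic_succ_neq: "2 \<le> (n::nat) \<Longrightarrow> k < n \<Longrightarrow> (k + 1) mod n \<noteq> k"
  by (cases "k + 1 < n") (auto simp: mod_if)

lemma cycle_integral_LIMSEQ:
  fixes g :: "nat \<Rightarrow> real \<Rightarrow> real"
  assumes n: "2 \<le> n" and g: "\<And>k. k < n \<Longrightarrow> abs_conv_fourier (g k)"
  shows "(\<lambda>N. \<Sum>c\<in>{- int N..int N}. \<Prod>k<n. fourier_coeff (g k) c)
           \<longlonglongrightarrow> complex_of_real (\<integral>x. (\<Prod>k<n. g k (x ((k + 1) mod n) - x k)) \<partial>unit_cube {..<n})"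
proof -
  have "(\<lambda>N. \<integral>x. (\<Prod>k<n. fourier_partial_sum (fourier_coeff (g k)) N (x ((k + 1) mod n) - x k)) \<partial>unit_cube {..<n})
      \<longlonglongrightarrow> complex_of_real (\<integral>x. (\<Prod>k<n. g k (x ((k + 1) mod n) - x k)) \<partial>unit_cube {..<n})"
  proof (rule integral_prod_fourier_partial_sums_LIMSEQ[OF prob_space_unit_cube finite_lessThan])
    fix k and Z :: "real set" assume k: "k \<in> {..<n}" and Z: "Z \<in> null_sets lborel"
    have "(k + 1) mod n \<noteq> k" using k by (intro cyclic_succ_neq n) simp
    then show "AE x in unit_cube {..<n}. x ((k + 1) mod n) - x k \<notin> Z"
      using AE_unit_cube_translate_not_in[of "{..<n}" "(k + 1) mod n" Z "\<lambda>x. - x k"] k Z n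
      by (simp add: borel_measurable_unit_cube_component)
  qed (use n g in \<open>auto intro!: borel_measurable_diff borel_measurable_unit_cube_component\<close>)
  moreover have "0 < n" using n by simp
  ultimately show ?thesis
    unfolding fourier_partial_sum_def by (simp only: integral_cycle_trig_poly)
qed

lemma borel_measurable_plaquette:
  assumes "p \<in> {..<L} \<times> {..<L}"
  shows "(\<lambda>z. plaquette L (fst z) (snd z) p)
           \<in> borel_measurable (unit_cube ({..<L} \<times> {..<L}) \<Otimes>\<^sub>M unit_cube ({..<L} \<times> {..<L}))"
  unfolding plaquette_def using assms plaquette_neighbours_in_grid[OF assms]
  by (intro borel_measurable_add borel_measurable_diff
      measurable_compose[OF measurable_fst borel_measurable_unit_cube_component]
      measurable_compose[OF measurable_snd borel_measurable_unit_cube_component])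

lemma plaquette_inner_integral_LIMSEQ:
  fixes f :: "nat \<times> nat \<Rightarrow> real \<Rightarrow> real"
  assumes L: "2 \<le> L" and f: "\<And>p. p \<in> {..<L} \<times> {..<L} \<Longrightarrow> abs_conv_fourier (f p)"
  defines "K \<equiv> {..<L} \<times> {..<L}"
  shows "(\<lambda>N. \<integral>xb. (\<Prod>p\<in>K. fourier_partial_sum (fourier_coeff (f p)) N (plaquette L xa xb p)) \<partial>unit_cube K)
           \<longlonglongrightarrow> complex_of_real (\<integral>xb. (\<Prod>p\<in>K. f p (plaquette L xa xb p)) \<partial>unit_cube K)"
proof (rule integral_prod_fourier_partial_sums_LIMSEQ[OF prob_space_unit_cube])
  fix p and Z :: "real set" assume p: "p \<in> K" and Z: "Z \<in> null_sets lborel"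
  have K: "finite K" and q: "((fst p + 1) mod L, snd p) \<in> K"
    using plaquette_neighbours_in_grid[of p L] p by (simp_all add: K_def)
  have w: "(\<lambda>xb. xa p - xa (fst p, (snd p + 1) mod L) - xb p) \<in> borel_measurable (unit_cube K)"
    using p by (intro borel_measurable_diff borel_measurable_const borel_measurable_unit_cube_component)
  have "((fst p + 1) mod L, snd p) \<noteq> p" using p cyclic_succ_neq[OF L, of "fst p"] by (auto simp: K_def)
  then show "AE xb in unit_cube K. plaquette L xa xb p \<notin> Z"
    using AE_unit_cube_translate_not_in[OF K q Z w] by (simp add: plaquette_def algebra_simps)
next
  show "(\<lambda>xb. plaquette L xa xb p) \<in> borel_measurable (unit_cube K)" if "p \<in> K" for p
    using that plaquette_neighbours_in_grid[of p L] unfolding plaquette_def K_def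
    by (intro borel_measurable_add borel_measurable_diff borel_measurable_const
        borel_measurable_unit_cube_component) auto
qed (use f in \<open>simp_all add: K_def\<close>)

lemma plaquette_integral_LIMSEQ:
  fixes f :: "nat \<Rightarrow> nat \<Rightarrow> real \<Rightarrow> real"
  assumes L: "2 \<le> L" and f: "\<And>i j. i < L \<Longrightarrow> j < L \<Longrightarrow> abs_conv_fourier (f i j)"
  defines "K \<equiv> {..<L} \<times> {..<L}"
  shows "(\<lambda>N. \<Sum>c\<in>{- int N..int N}. \<Prod>i<L. \<Prod>j<L. fourier_coeff (f i j) c)
           \<longlonglongrightarrow> complex_of_real (\<integral>xa. (\<integral>xb. (\<Prod>i<L. \<Prod>j<L.
                 f i j (xa (i, j) - xa (i, (j + 1) mod L) - xb (i, j) + xb ((i + 1) mod L, j)))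
               \<partial>unit_cube K) \<partial>unit_cube K)"
proof -
  interpret prob_space "unit_cube K" by (rule prob_space_unit_cube)
  define c where "c p = fourier_coeff (f (fst p) (snd p))" for p
  define F where "F xa = (\<integral>xb. (\<Prod>p\<in>K. f (fst p) (snd p) (plaquette L xa xb p)) \<partial>unit_cube K)" for xa
  define P where "P N xa = (\<integral>xb. (\<Prod>p\<in>K. fourier_partial_sum (c p) N (plaquette L xa xb p)) \<partial>unit_cube K)"
    for N xa
  have P_F: "(\<lambda>N. P N xa) \<longlonglongrightarrow> complex_of_real (F xa)" for xa
    unfolding P_def F_def c_def K_def using L f by (intro plaquette_inner_integral_LIMSEQ) auto
  have S: "(\<lambda>m. norm (c p m)) summable_on UNIV" if "p \<in> K" for p
    using f[of "fst p" "snd p"] that unfolding abs_conv_fourier_def c_def by (auto simp: K_def)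
  define B where "B = (\<Prod>p\<in>K. infsum (\<lambda>m. norm (c p m)) UNIV)"
  have P_bound: "norm (P N xa) \<le> B" for N xa
    unfolding P_def B_def
    by (intro prob_space_norm_integral_le[OF prob_space_unit_cube] order_trans[OF norm_prod_le] prod_mono)
       (auto intro: norm_fourier_partial_sum_le[OF S])
  have P_borel: "P N \<in> borel_measurable (unit_cube K)" for N
    unfolding P_def
    by (rule borel_measurable_lebesgue_integral)
       (auto simp: case_prod_beta' K_def intro!: borel_measurable_prod measurable_compose[OF borel_measurable_plaquette])
  have "(\<lambda>N. \<integral>xa. P N xa \<partial>unit_cube K) \<longlonglongrightarrow> (\<integral>xa. complex_of_real (F xa) \<partial>unit_cube K)"
    by (rule integral_dominated_convergence[where w = "\<lambda>_. B"])
       (auto intro: P_borel P_bound P_F borel_measurable_LIMSEQ_metric[OF P_borel P_F])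
  moreover have "(\<integral>xa. P N xa \<partial>unit_cube K) = (\<Sum>c\<in>{- int N..int N}. \<Prod>i<L. \<Prod>j<L. fourier_coeff (f i j) c)" for N
    using integral_plaquette_trig_poly[of L c "int N"] L
    unfolding P_def c_def fourier_partial_sum_def K_def
    by (simp add: prod.cartesian_product case_prod_beta)
  moreover have "F xa = (\<integral>xb. (\<Prod>i<L. \<Prod>j<L.
      f i j (xa (i, j) - xa (i, (j + 1) mod L) - xb (i, j) + xb ((i + 1) mod L, j))) \<partial>unit_cube K)" for xa
    unfolding F_def plaquette_def K_def by (simp add: prod.cartesian_product case_prod_beta)
  ultimately show ?thesis by simp
qed

lemma prod_lessThan_mult_mod_div:
  fixes g :: "nat \<Rightarrow> nat \<Rightarrow> 'a::comm_monoid_mult"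
  shows "(\<Prod>k<L * L. g (k mod L) (k div L)) = (\<Prod>i<L. \<Prod>j<L. g i j)"
proof -
  have "(\<Prod>k<L * L. g (k mod L) (k div L)) = (\<Prod>p\<in>{..<L} \<times> {..<L}. g (fst p) (snd p))"
  proof (rule prod.reindex_bij_witness[of _ "\<lambda>p. fst p + snd p * L" "\<lambda>k. (k mod L, k div L)"])
    fix p assume "p \<in> {..<L} \<times> {..<L}"
    moreover have "i + j * L < L * L" if "i < L" "j < L" for i j
      using that mult_le_mono1[of "Suc j" L L] by simp
    ultimately show "fst p + snd p * L \<in> {..<L * L}"
      "((fst p + snd p * L) mod L, (fst p + snd p * L) div L) = p" by auto
  next
    fix k assume k: "k \<in> {..<L * L}"
    then have "0 < L" by (cases L) auto
    with k show "(k mod L, k div L) \<in> {..<L} \<times> {..<L}" by (auto simp: less_mult_imp_div_less)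
  qed auto
  then show ?thesis by (simp add: prod.cartesian_product case_prod_beta)
qed

theorem mainTheorem3:
  fixes L :: nat and f :: "nat \<Rightarrow> nat \<Rightarrow> real \<Rightarrow> real"
  assumes "L \<ge> 2"
    and "\<forall>i<L. \<forall>j<L. abs_conv_fourier (f i j)"
  shows "(\<integral>xa. (\<integral>xb. (\<Prod>i<L. \<Prod>j<L.
              f i j (xa (i, j) - xa (i, (j + 1) mod L) - xb (i, j) + xb ((i + 1) mod L, j)))
            \<partial>unit_cube ({..<L} \<times> {..<L})) \<partial>unit_cube ({..<L} \<times> {..<L}))
       = (\<integral>x. (\<Prod>k<L * L. f (k mod L) (k div L) (x ((k + 1) mod (L * L)) - x k))
            \<partial>unit_cube {..<L * L})"
proof -
  have "2 \<le> L * L" using assms(1) mult_le_mono[of 1 L 2 L] by simp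
  moreover have "abs_conv_fourier (f (k mod L) (k div L))" if "k < L * L" for k
    using assms that by (simp add: less_mult_imp_div_less)
  ultimately have cycle: "(\<lambda>N. \<Sum>c\<in>{- int N..int N}. \<Prod>i<L. \<Prod>j<L. fourier_coeff (f i j) c)
      \<longlonglongrightarrow> complex_of_real (\<integral>x. (\<Prod>k<L * L. f (k mod L) (k div L) (x ((k + 1) mod (L * L)) - x k))
            \<partial>unit_cube {..<L * L})"
    using cycle_integral_LIMSEQ[of "L * L" "\<lambda>k. f (k mod L) (k div L)"]
    by (simp add: prod_lessThan_mult_mod_div[where g = "\<lambda>i j. fourier_coeff (f i j) _"])
  have plaquette: "(\<lambda>N. \<Sum>c\<in>{- int N..int N}. \<Prod>i<L. \<Prod>j<L. fourier_coeff (f i j) c)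
      \<longlonglongrightarrow> complex_of_real (\<integral>xa. (\<integral>xb. (\<Prod>i<L. \<Prod>j<L.
              f i j (xa (i, j) - xa (i, (j + 1) mod L) - xb (i, j) + xb ((i + 1) mod L, j)))
            \<partial>unit_cube ({..<L} \<times> {..<L})) \<partial>unit_cube ({..<L} \<times> {..<L}))"
    using assms by (intro plaquette_integral_LIMSEQ) auto
  from LIMSEQ_unique[OF plaquette cycle] show ?thesis by simp
qed

end
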